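(* Consider instances with binary domains ($|D_i|=2$ for all $i$) and a natural target distribution $\pi$ (i.e. $k\pi_i^j$ is an integer for all $i,j$), with loss $\|\cdot\|_1$. Consider the local search algorithm with parameter $\ell=1$: start from an arbitrary committee $A\subseteq C$ with $|A|=k$; while there exist $a\in A$ and $c\in C\setminus A$ with $\|\pi,r((A\setminus\{a\})\cup\{c\})\|_1<\|\pi,r(A)\|_1$, replace $A$ by $(A\setminus\{a\})\cup\{c\}$; output $A$. Then for every instance and every starting committee, the output $A$ satisfies $\|\pi,r(A)\|_1-\|\pi,r(A^* )\|_1\le p$, where $A^*$ is a committee of size $k$ optimal for $\|\cdot\|_1$ and $p$ is the number of attributes.
   Context: Attributes $X_1,\dots,X_p$, each with finite domain $D_i=\{x_i^1,\dots,x_i^{q_i}\}$. A candidate database is a finite set $C$ in which each candidate $c$ has a value vector $(X_1(c),\dots,X_p(c))\in D_1\times\dots\times D_p$ (different candidates may share a vector). A target distribution is $\pi=(\pi_1,\dots,\pi_p)$ with $\pi_i=(\pi_i^1,\dots,\pi_i^{q_i})$ nonnegative reals summing to $1$; $k\in\{1,\dots,|C|\}$. For $A\subseteq C$ with $|A|=k$, $r_i^j(A)=|\{c\in A: X_i(c)=x_i^j\}|/k$, and $\|\pi,r(A)\|_1=\sum_{i,j}|r_i^j(A)-\pi_i^j|$. A committee of size $k$ is optimal if it minimizes this loss over all $k$-element subsets of $C$. *)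

theory Defs
  imports "HOL-Analysis.Analysis"
begin

text \<open>Attributes are indexed by i < p; X i c is the value of attribute i for candidate c;
  D i is the (finite) domain of attribute i; tgt i v is the target share of value v of attribute i.\<close>

definition share :: "nat \<Rightarrow> (nat \<Rightarrow> 'c \<Rightarrow> 'v) \<Rightarrow> 'c set \<Rightarrow> nat \<Rightarrow> 'v \<Rightarrow> real" where
  "share k X A i v = real (card {c \<in> A. X i c = v}) / real k"

definition loss1 :: "nat \<Rightarrow> (nat \<Rightarrow> 'v set) \<Rightarrow> (nat \<Rightarrow> 'c \<Rightarrow> 'v) \<Rightarrow> (nat \<Rightarrow> 'v \<Rightarrow> real)
    \<Rightarrow> nat \<Rightarrow> 'c set \<Rightarrow> real" where
  "loss1 p D X tgt k A = (\<Sum>i<p. \<Sum>v\<in>D i. \<bar>share k X A i v - tgt i v\<bar>)"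

definition committee :: "'c set \<Rightarrow> nat \<Rightarrow> 'c set \<Rightarrow> bool" where
  "committee C k A \<longleftrightarrow> A \<subseteq> C \<and> card A = k"

definition optimal_committee :: "nat \<Rightarrow> (nat \<Rightarrow> 'v set) \<Rightarrow> (nat \<Rightarrow> 'c \<Rightarrow> 'v) \<Rightarrow> (nat \<Rightarrow> 'v \<Rightarrow> real)
    \<Rightarrow> 'c set \<Rightarrow> nat \<Rightarrow> 'c set \<Rightarrow> bool" where
  "optimal_committee p D X tgt C k A \<longleftrightarrow> committee C k A \<and>
     (\<forall>B. committee C k B \<longrightarrow> loss1 p D X tgt k A \<le> loss1 p D X tgt k B)"

definition ls_step :: "nat \<Rightarrow> (nat \<Rightarrow> 'v set) \<Rightarrow> (nat \<Rightarrow> 'c \<Rightarrow> 'v) \<Rightarrow> (nat \<Rightarrow> 'v \<Rightarrow> real)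
    \<Rightarrow> 'c set \<Rightarrow> nat \<Rightarrow> 'c set \<Rightarrow> 'c set \<Rightarrow> bool" where
  "ls_step p D X tgt C k A A' \<longleftrightarrow>
     (\<exists>a\<in>A. \<exists>c\<in>C - A. A' = insert c (A - {a}) \<and>
        loss1 p D X tgt k A' < loss1 p D X tgt k A)"

definition ls_output :: "nat \<Rightarrow> (nat \<Rightarrow> 'v set) \<Rightarrow> (nat \<Rightarrow> 'c \<Rightarrow> 'v) \<Rightarrow> (nat \<Rightarrow> 'v \<Rightarrow> real)
    \<Rightarrow> 'c set \<Rightarrow> nat \<Rightarrow> 'c set \<Rightarrow> 'c set \<Rightarrow> bool" where
  "ls_output p D X tgt C k A0 A \<longleftrightarrow>
     (ls_step p D X tgt C k)\<^sup>*\<^sup>* A0 A \<and> \<not> (\<exists>A'. ls_step p D X tgt C k A A')"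

end

theory Submission
  imports Defs
begin

(* With two values per attribute, fix one value u_i of each attribute. The loss of a committee S
  of size k is then 2/k times the integer deviation sum_i |n_i(S) - T_i|, where n_i(S) counts the
  members with value u_i and T_i = k * tgt_i(u_i) is an integer because the target is natural.
  Let A be swap-stable, B optimal, and m = |A - B| = |B - A| > 0. Sum the stability inequalities
  over all m^2 swaps of some a in A - B against some c in B - A. For an attribute whose deviation
  d_i at A is nonzero, integrality means no single swap flips the sign of d_i, so the swaps act
  linearly and their total gain is m sgn(d_i) (e_i - d_i) <= m (|e_i| - |d_i|), with e_i the
  deviation at B; an attribute with d_i = 0 gains at most m^2 in total. Since the total gain is
  nonnegative, |d_i| <= k and m <= k, this yields 2 (dev A - dev B) <= p k, i.e. the loss gap is
  at most p. *)

lemma abs_add_eq_sgn_mult: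
  fixes d e :: int
  assumes "d \<noteq> 0" and "\<bar>e\<bar> \<le> 1"
  shows "\<bar>d + e\<bar> - \<bar>d\<bar> = sgn d * e"
  using assms by (cases "d > 0") (auto simp: abs_if sgn_if)

lemma sgn_mult_diff_le_abs_diff:
  fixes d e :: int
  shows "sgn d * (e - d) \<le> \<bar>e\<bar> - \<bar>d\<bar>"
  by (cases d "0 :: int" rule: linorder_cases) auto

lemma swap_gain_sum_le:
  fixes x :: "'c \<Rightarrow> int" and d :: int
  assumes card: "card P = m" "card Q = m" and x01: "\<And>c. x c \<in> {0, 1}"
  shows "(\<Sum>a\<in>P. \<Sum>c\<in>Q. \<bar>d + x c - x a\<bar> - \<bar>d\<bar>)
           \<le> int m * (if d = 0 then int m else \<bar>d + sum x Q - sum x P\<bar> - \<bar>d\<bar>)"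
proof (cases "d = 0")
  case True
  have "(\<Sum>a\<in>P. \<Sum>c\<in>Q. \<bar>d + x c - x a\<bar> - \<bar>d\<bar>) \<le> (\<Sum>a\<in>P. \<Sum>c\<in>Q. 1)"
  proof (intro sum_mono)
    fix a c
    show "\<bar>d + x c - x a\<bar> - \<bar>d\<bar> \<le> 1"
      using True x01[of a] x01[of c] by auto
  qed
  then show ?thesis
    using True card by simp
next
  case False
  have "(\<Sum>a\<in>P. \<Sum>c\<in>Q. \<bar>d + x c - x a\<bar> - \<bar>d\<bar>) = (\<Sum>a\<in>P. \<Sum>c\<in>Q. sgn d * (x c - x a))"
  proof (intro sum.cong refl)
    fix a c
    have "\<bar>x c - x a\<bar> \<le> 1"
      using x01[of a] x01[of c] by auto
    then show "\<bar>d + x c - x a\<bar> - \<bar>d\<bar> = sgn d * (x c - x a)"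
      by (metis abs_add_eq_sgn_mult[OF False] add_diff_eq)
  qed
  also have "\<dots> = int m * (sgn d * ((d + sum x Q - sum x P) - d))"
    using card by (simp add: sum_subtractf sum_distrib_left algebra_simps)
  also have "\<dots> \<le> int m * (\<bar>d + sum x Q - sum x P\<bar> - \<bar>d\<bar>)"
    by (intro mult_left_mono sgn_mult_diff_le_abs_diff) simp
  finally show ?thesis
    using False by simp
qed

definition deviation :: "nat \<Rightarrow> (nat \<Rightarrow> 'c \<Rightarrow> int) \<Rightarrow> (nat \<Rightarrow> int) \<Rightarrow> 'c set \<Rightarrow> int" where
  "deviation p x T S = (\<Sum>i<p. \<bar>sum (x i) S - T i\<bar>)"

lemma card_Diff_commute:
  assumes "finite A" and "finite B" and "card A = card B"
  shows "card (A - B) = card (B - A)"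
  using assms card_Diff_subset_Int[of A B] card_Diff_subset_Int[of B A] by (simp add: Int_commute)

lemma sum_eq_sum_add_Diff_diff:
  fixes f :: "'a \<Rightarrow> 'b :: ab_group_add"
  assumes "finite A" and "finite B"
  shows "sum f B = sum f A + sum f (B - A) - sum f (A - B)"
proof -
  have "A - A \<inter> B = A - B" "B - A \<inter> B = B - A"
    by blast+
  then show ?thesis
    using sum.subset_diff[of "A \<inter> B" A f] sum.subset_diff[of "A \<inter> B" B f] assms by simp
qed

lemma swap_stable_total_gain_nonneg:
  fixes x :: "nat \<Rightarrow> 'c \<Rightarrow> int" and T :: "nat \<Rightarrow> int"
  assumes fin: "finite A" "finite B" and card: "card A = card B" and "A - B \<noteq> {}"
    and x01: "\<And>i c. x i c \<in> {0, 1}"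
    and stable: "\<And>a c. a \<in> A - B \<Longrightarrow> c \<in> B - A \<Longrightarrow>
                   deviation p x T A \<le> deviation p x T (insert c (A - {a}))"
  shows "0 \<le> (\<Sum>i<p. if sum (x i) A = T i then int (card (A - B))
                      else \<bar>sum (x i) B - T i\<bar> - \<bar>sum (x i) A - T i\<bar>)"
    (is "0 \<le> (\<Sum>i<p. ?bound i)")
proof -
  define m where "m = card (A - B)"
  define d where "d i = sum (x i) A - T i" for i
  have gain: "0 \<le> (\<Sum>i<p. \<bar>d i + x i c - x i a\<bar> - \<bar>d i\<bar>)" if "a \<in> A - B" "c \<in> B - A" for a c
  proof -
    have "a \<in> A" "c \<notin> A"
      using that by auto
    with stable[OF that] fin show ?thesis
      by (simp add: deviation_def d_def sum_diff1 sum_subtractf algebra_simps)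
  qed
  have "0 \<le> (\<Sum>a\<in>A - B. \<Sum>c\<in>B - A. \<Sum>i<p. \<bar>d i + x i c - x i a\<bar> - \<bar>d i\<bar>)"
    by (intro sum_nonneg[OF sum_nonneg] gain)
  also have "\<dots> = (\<Sum>i<p. \<Sum>a\<in>A - B. \<Sum>c\<in>B - A. \<bar>d i + x i c - x i a\<bar> - \<bar>d i\<bar>)"
    by (subst sum.swap) (simp add: sum.swap[of _ "B - A"])
  also have "\<dots> \<le> (\<Sum>i<p. int m * ?bound i)"
  proof (rule sum_mono)
    fix i
    have B: "d i + sum (x i) (B - A) - sum (x i) (A - B) = sum (x i) B - T i"
      using sum_eq_sum_add_Diff_diff[OF fin, of "x i"] unfolding d_def by linarith
    have "card (B - A) = m"
      using card_Diff_commute[OF fin card] by (simp add: m_def)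
    then have "(\<Sum>a\<in>A - B. \<Sum>c\<in>B - A. \<bar>d i + x i c - x i a\<bar> - \<bar>d i\<bar>)
        \<le> int m * (if d i = 0 then int m else \<bar>d i + sum (x i) (B - A) - sum (x i) (A - B)\<bar> - \<bar>d i\<bar>)"
      by (rule swap_gain_sum_le[OF m_def[symmetric] _ x01])
    also have "\<dots> = int m * ?bound i"
      unfolding B by (simp add: m_def d_def)
    finally show "(\<Sum>a\<in>A - B. \<Sum>c\<in>B - A. \<bar>d i + x i c - x i a\<bar> - \<bar>d i\<bar>) \<le> int m * ?bound i" .
  qed
  finally show ?thesis
    using assms(4) fin by (simp add: m_def sum_distrib_left[symmetric] zero_le_mult_iff)
qed

lemma swap_stable_deviation_gap:
  fixes x :: "nat \<Rightarrow> 'c \<Rightarrow> int" and T :: "nat \<Rightarrow> int"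
  assumes fin: "finite A" "finite B" and card: "card A = k" "card B = k"
    and x01: "\<And>i c. x i c \<in> {0, 1}"
    and T: "\<And>i. i < p \<Longrightarrow> 0 \<le> T i \<and> T i \<le> int k"
    and stable: "\<And>a c. a \<in> A - B \<Longrightarrow> c \<in> B - A \<Longrightarrow>
                   deviation p x T A \<le> deviation p x T (insert c (A - {a}))"
  shows "2 * (deviation p x T A - deviation p x T B) \<le> int p * int k"
proof (cases "A - B = {}")
  case True
  then have "A = B"
    using card_subset_eq fin card by (metis Diff_eq_empty_iff)
  then show ?thesis
    by simp
next
  case False
  define m where "m = card (A - B)"
  define d where "d i = sum (x i) A - T i" for i
  define e where "e i = sum (x i) B - T i" for i
  define bound where "bound i = (if d i = 0 then int m else \<bar>e i\<bar> - \<bar>d i\<bar>)" for i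
  have bound_nonneg: "0 \<le> (\<Sum>i<p. bound i)"
    using swap_stable_total_gain_nonneg[OF fin _ False x01 stable] card
    unfolding bound_def m_def d_def e_def by simp
  have "2 * (\<bar>d i\<bar> - \<bar>e i\<bar>) \<le> int k - bound i" if "i < p" for i
  proof -
    have "0 \<le> x i c \<and> x i c \<le> 1" for c
      using x01[of i c] by auto
    then have "0 \<le> sum (x i) A" "sum (x i) A \<le> int k"
      using sum_bounded_above[of A "x i" 1] card(1) by (auto intro: sum_nonneg)
    moreover have "m \<le> k"
      using fin card card_mono[of A "A - B"] by (simp add: m_def)
    ultimately show ?thesis
      using T[OF that] by (auto simp: bound_def d_def)
  qed
  then have "2 * (\<Sum>i<p. \<bar>d i\<bar> - \<bar>e i\<bar>) \<le> (\<Sum>i<p. int k - bound i)"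
    unfolding sum_distrib_left by (intro sum_mono) simp
  then show ?thesis
    using bound_nonneg by (simp add: deviation_def sum_subtractf d_def e_def)
qed

lemma binary_attribute_loss:
  assumes fin: "finite S" and card: "card S = k" and k: "k > 0"
    and D: "card (D i) = 2" "u \<in> D i" and vals: "\<And>c. c \<in> S \<Longrightarrow> X i c \<in> D i"
    and tgt_sum: "(\<Sum>v\<in>D i. tgt i v) = 1"
  shows "(\<Sum>v\<in>D i. \<bar>share k X S i v - tgt i v\<bar>)
           = 2 / real k * \<bar>real (card {c \<in> S. X i c = u}) - real k * tgt i u\<bar>"
proof -
  obtain w where w: "D i = {u, w}" "w \<noteq> u"
    using D by (auto simp: card_2_iff) (metis insert_commute)
  define nu nw where "nu = real (card {c \<in> S. X i c = u})" and "nw = real (card {c \<in> S. X i c = w})"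
  have "card {c \<in> S. X i c = u} + card {c \<in> S. X i c = w}
          = card ({c \<in> S. X i c = u} \<union> {c \<in> S. X i c = w})"
    using fin w(2) by (intro card_Un_disjoint[symmetric]) auto
  also have "{c \<in> S. X i c = u} \<union> {c \<in> S. X i c = w} = S"
    using vals w(1) by auto
  finally have "nw = real k - nu"
    using card by (simp add: nu_def nw_def flip: of_nat_add)
  moreover have "tgt i w = 1 - tgt i u"
    using tgt_sum w by simp
  ultimately have "nw / k - tgt i w = - (nu / k - tgt i u)"
    using k by (simp add: diff_divide_distrib)
  then have "(\<Sum>v\<in>D i. \<bar>share k X S i v - tgt i v\<bar>) = 2 * \<bar>nu / k - tgt i u\<bar>"
    using w by (simp add: share_def nu_def nw_def)
  also have "\<dots> = 2 / real k * \<bar>nu - real k * tgt i u\<bar>"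
    using k by (simp add: field_simps abs_divide flip: abs_mult)
  finally show ?thesis
    by (simp add: nu_def)
qed

lemma loss1_binary_eq_deviation:
  assumes fin: "finite S" and card: "card S = k" and k: "k > 0"
    and binary: "\<And>i. i < p \<Longrightarrow> card (D i) = 2"
    and vals: "\<And>i c. i < p \<Longrightarrow> c \<in> S \<Longrightarrow> X i c \<in> D i"
    and tgt_sum: "\<And>i. i < p \<Longrightarrow> (\<Sum>v\<in>D i. tgt i v) = 1"
    and u: "\<And>i. i < p \<Longrightarrow> u i \<in> D i"
    and T: "\<And>i. i < p \<Longrightarrow> real_of_int (T i) = real k * tgt i (u i)"
  shows "loss1 p D X tgt k S = 2 / real k * deviation p (\<lambda>i c. of_bool (X i c = u i)) T S"
  unfolding loss1_def deviation_def of_int_sum sum_distrib_left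
proof (rule sum.cong[OF refl])
  fix i
  assume "i \<in> {..<p}"
  then have i: "i < p"
    by simp
  have "{c \<in> S. X i c = u i} = S \<inter> {c. X i c = u i}"
    by blast
  then show "(\<Sum>v\<in>D i. \<bar>share k X S i v - tgt i v\<bar>)
               = 2 / real k * of_int \<bar>(\<Sum>c\<in>S. of_bool (X i c = u i)) - T i\<bar>"
    using binary_attribute_loss[where D=D and X=X and tgt=tgt and i=i,
        OF fin card k binary[OF i] u[OF i] vals[OF i] tgt_sum[OF i]] fin T[OF i]
    by simp
qed

lemma committee_swap:
  assumes "finite C" and "committee C k A" and "a \<in> A" and "c \<in> C - A"
  shows "committee C k (insert c (A - {a}))"
  using assms finite_subset[of A C] card_Suc_Diff1[of A a] by (auto simp: committee_def)

lemma ls_step_committee: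
  assumes "finite C" and "committee C k A" and "ls_step p D X tgt C k A A'"
  shows "committee C k A'"
  using assms by (auto simp: ls_step_def intro!: committee_swap)

lemma ls_output_committee:
  assumes "finite C" and "committee C k A0" and "ls_output p D X tgt C k A0 A"
  shows "committee C k A"
proof -
  have "(ls_step p D X tgt C k)\<^sup>*\<^sup>* A0 A"
    using assms(3) by (simp add: ls_output_def)
  then show ?thesis
    using assms(2) by induction (auto intro: ls_step_committee[OF assms(1)])
qed

lemma ls_output_swap_not_improving:
  assumes "ls_output p D X tgt C k A0 A" and "a \<in> A" and "c \<in> C - A"
  shows "loss1 p D X tgt k A \<le> loss1 p D X tgt k (insert c (A - {a}))"
  using assms by (auto simp: ls_output_def ls_step_def not_less)

lemma obtain_integer_targets:
  fixes tgt :: "nat \<Rightarrow> 'v \<Rightarrow> real"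
  assumes fin: "\<And>i. i < p \<Longrightarrow> finite (D i)" and nonempty: "\<And>i. i < p \<Longrightarrow> D i \<noteq> {}"
    and tgt_nonneg: "\<And>i v. i < p \<Longrightarrow> v \<in> D i \<Longrightarrow> tgt i v \<ge> 0"
    and tgt_sum: "\<And>i. i < p \<Longrightarrow> (\<Sum>v\<in>D i. tgt i v) = 1"
    and natural: "\<And>i v. i < p \<Longrightarrow> v \<in> D i \<Longrightarrow> real k * tgt i v \<in> \<int>"
  obtains u T where "\<And>i. i < p \<Longrightarrow> u i \<in> D i"
    and "\<And>i. i < p \<Longrightarrow> real_of_int (T i) = real k * tgt i (u i)"
    and "\<And>i. i < p \<Longrightarrow> 0 \<le> T i \<and> T i \<le> int k"
proof -
  have "\<forall>i. \<exists>v. i < p \<longrightarrow> v \<in> D i"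
    using nonempty by blast
  then obtain u where u: "\<And>i. i < p \<Longrightarrow> u i \<in> D i"
    by metis
  have "\<forall>i. \<exists>z. i < p \<longrightarrow> real_of_int z = real k * tgt i (u i)"
    using natural u by (metis Ints_cases)
  then obtain T where T: "\<And>i. i < p \<Longrightarrow> real_of_int (T i) = real k * tgt i (u i)"
    by metis
  have "0 \<le> T i \<and> T i \<le> int k" if "i < p" for i
  proof -
    have "tgt i (u i) \<le> 1"
      using member_le_sum[of "u i" "D i" "tgt i"] u fin tgt_nonneg tgt_sum that by simp
    then have "0 \<le> real_of_int (T i)" "real_of_int (T i) \<le> real_of_int (int k)"
      using T[OF that] tgt_nonneg[OF that u[OF that]] by (simp_all add: mult_left_le)
    then show ?thesis
      by (simp only: of_int_le_iff of_int_0_le_iff)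
  qed
  with u T show thesis
    using that by blast
qed

theorem theorem1:
  fixes C :: "'c set" and p k :: nat and D :: "nat \<Rightarrow> 'v set"
    and X :: "nat \<Rightarrow> 'c \<Rightarrow> 'v" and tgt :: "nat \<Rightarrow> 'v \<Rightarrow> real"
    and A0 A Astar :: "'c set"
  assumes finC: "finite C"
    and binary: "\<And>i. i < p \<Longrightarrow> card (D i) = 2"
    and vals: "\<And>i c. i < p \<Longrightarrow> c \<in> C \<Longrightarrow> X i c \<in> D i"
    and tgt_nonneg: "\<And>i v. i < p \<Longrightarrow> v \<in> D i \<Longrightarrow> tgt i v \<ge> 0"
    and tgt_sum: "\<And>i. i < p \<Longrightarrow> (\<Sum>v\<in>D i. tgt i v) = 1"
    and natural: "\<And>i v. i < p \<Longrightarrow> v \<in> D i \<Longrightarrow> real k * tgt i v \<in> \<int>"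
    and k_pos: "1 \<le> k" and k_le: "k \<le> card C"
    and start: "committee C k A0"
    and result: "ls_output p D X tgt C k A0 A"
    and opt: "optimal_committee p D X tgt C k Astar"
  shows "loss1 p D X tgt k A - loss1 p D X tgt k Astar \<le> real p"
proof -
  have "finite (D i)" "D i \<noteq> {}" if "i < p" for i
    using binary[OF that] by (auto simp: card_2_iff)
  then obtain u T where u: "\<And>i. i < p \<Longrightarrow> u i \<in> D i"
    and T: "\<And>i. i < p \<Longrightarrow> real_of_int (T i) = real k * tgt i (u i)"
    and T_bounds: "\<And>i. i < p \<Longrightarrow> 0 \<le> T i \<and> T i \<le> int k"
    using obtain_integer_targets[of p D tgt k] tgt_nonneg tgt_sum natural by blast
  define x where "x i c = (of_bool (X i c = u i) :: int)" for i c
  have loss: "loss1 p D X tgt k S = 2 / real k * deviation p x T S" if "committee C k S" for S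
    using that finC binary vals tgt_sum u T k_pos unfolding committee_def x_def
    by (intro loss1_binary_eq_deviation) (auto intro: finite_subset)
  have A: "committee C k A"
    using ls_output_committee[OF finC start result] .
  have Astar: "committee C k Astar"
    using opt by (simp add: optimal_committee_def)
  have "2 * (deviation p x T A - deviation p x T Astar) \<le> int p * int k"
  proof (rule swap_stable_deviation_gap[OF _ _ _ _ _ T_bounds])
    fix a c
    assume "a \<in> A - Astar" "c \<in> Astar - A"
    then have "a \<in> A" "c \<in> C - A"
      using Astar by (auto simp: committee_def)
    then show "deviation p x T A \<le> deviation p x T (insert c (A - {a}))"
      using ls_output_swap_not_improving[OF result] committee_swap[OF finC A] loss A k_pos
      by (simp add: divide_simps)
  qed (use A Astar finC in \<open>auto simp: committee_def x_def intro: finite_subset\<close>)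
  then have "real_of_int (2 * (deviation p x T A - deviation p x T Astar)) \<le> real_of_int (int p * int k)"
    by (simp only: of_int_le_iff)
  then show ?thesis
    using k_pos by (simp add: loss[OF A] loss[OF Astar] field_simps)
qed

end
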